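(* Let $m,n$ be positive integers and suppose $\mathbf{a},\mathbf{b}\in\mathcal{T}^{n+1}$, $\mathbf{c},\mathbf{d}\in\mathcal{T}^{n}$, $\mathbf{f},\mathbf{g}\in\mathcal{T}^{m+1}$, $\mathbf{h},\mathbf{e}\in\mathcal{T}^{m}$ satisfy \[ (\phi_{\mathbf{a}}\phi^*_{\mathbf{a}}+\phi_{\mathbf{b}}\phi^*_{\mathbf{b}}+\phi_{\mathbf{c}}\phi^*_{\mathbf{c}}+\phi_{\mathbf{d}}\phi^*_{\mathbf{d}})(x)=2(2n+1),\qquad (\phi_{\mathbf{e}}\phi^*_{\mathbf{e}}+\phi_{\mathbf{f}}\phi^*_{\mathbf{f}}+\phi_{\mathbf{g}}\phi^*_{\mathbf{g}}+\phi_{\mathbf{h}}\phi^*_{\mathbf{h}})(x)=2(2m+1) \] in $\mathcal{R}[x^{\pm1}]$. Then there exist $\mathbf{q},\mathbf{r},\mathbf{s},\mathbf{t}\in\mathcal{T}^{(2m+1)(2n+1)}$ such that \[ (\phi_{\mathbf{q}}\phi^*_{\mathbf{q}}+\phi_{\mathbf{r}}\phi^*_{\mathbf{r}}+\phi_{\mathbf{s}}\phi^*_{\mathbf{s}}+\phi_{\mathbf{t}}\phi^*_{\mathbf{t}})(x)=4(2m+1)(2n+1). \] (Equivalently, the same statement holds with $\psi$ in place of $\phi$ throughout.)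
   Context: $\mathcal{R}$ is a commutative ring with identity equipped with an involutive ring automorphism $*$, extended to $\mathcal{R}[x^{\pm1}]$ by acting on coefficients and $x\mapsto x^{-1}$; $f^*$ denotes the image of $f$. $\mathcal{T}$ is a multiplicatively closed subset of $\mathcal{R}\setminus\{0\}$ with $-1\in\mathcal{T}$ and $\mathcal{T}^*=\mathcal{T}$. For $\mathbf{a}=(a_0,\dots,a_{l-1})\in\mathcal{R}^l$, $\phi_{\mathbf{a}}(x)=\sum_{i=0}^{l-1}a_ix^i$ and $\psi_{\mathbf{a}}(x)=x^{1-l}\phi_{\mathbf{a}}(x^2)$; note $\psi_{\mathbf{a}}\psi_{\mathbf{a}}^*(x)=\phi_{\mathbf{a}}\phi^*_{\mathbf{a}}(x^2)$. *)

theory Defs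
  imports "HOL-Library.Poly_Mapping"
begin

text \<open>Laurent polynomials R[x^{+-1}] are modelled as the group ring R[Z], i.e. the
  finitely supported functions int =>0 R with convolution product (HOL-Library.Poly_Mapping).
  The monomial x^k is Poly_Mapping.single k 1.\<close>

type_synonym 'a laurent = "int \<Rightarrow>\<^sub>0 'a"

definition phi :: "'a::comm_ring_1 list \<Rightarrow> 'a laurent" where
  "phi a = (\<Sum>i<length a. Poly_Mapping.single (int i) (a ! i))"

definition lstar :: "('a::comm_ring_1 \<Rightarrow> 'a) \<Rightarrow> 'a laurent \<Rightarrow> 'a laurent" where
  "lstar st f = (\<Sum>k\<in>Poly_Mapping.keys f. Poly_Mapping.single (- k) (st (Poly_Mapping.lookup f k)))"

text \<open>psi_a(x) = x^{1-l} phi_a(x^2).\<close>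
definition psi :: "'a::comm_ring_1 list \<Rightarrow> 'a laurent" where
  "psi a = (\<Sum>i<length a. Poly_Mapping.single (2 * int i + 1 - int (length a)) (a ! i))"

end

theory Submission
  imports Defs
begin

(* Write N(F) = F F^*. Since psi_a(x) is a monomial times phi_a(x^2), the hypotheses say
   N(psi_a) + N(psi_b) + N(psi_c) + N(psi_d) = 2(2n+1), and likewise for e, f, g, h; the latter
   identity survives the substitution x -> x^(2n+1). Euler's four-square identity, valid in any
   commutative ring with involution, writes the product of the two left-hand sides as a sum of four
   norms N(S), each S a signed sum of four products X Y with X among psi_a, ..., psi_d and their
   conjugates and Y among psi_e(x^(2n+1)), ..., psi_h(x^(2n+1)) and their conjugates. The exponents
   of psi_a, psi_b are -n, -n+2, ..., n, those of psi_c, psi_d the remaining integers in [-n, n], and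
   likewise for e, f, g, h at scale 2n+1. Hence S has exactly one coefficient, a product of two
   elements of T, at each exponent in [-N, N], where 2N+1 = (2m+1)(2n+1): S is a monomial times
   phi_q for a sequence q in T^((2m+1)(2n+1)), and N(S) = N(phi_q). *)

definition pm_extend :: "(int \<Rightarrow> 'a::comm_ring_1 \<Rightarrow> 'a laurent) \<Rightarrow> 'a laurent \<Rightarrow> 'a laurent" where
  "pm_extend h f = (\<Sum>k\<in>Poly_Mapping.keys f. h k (Poly_Mapping.lookup f k))"

lemma poly_mapping_sum_single:
  "f = (\<Sum>k\<in>Poly_Mapping.keys f. Poly_Mapping.single k (Poly_Mapping.lookup f k))"
  for f :: "'a::comm_ring_1 laurent"
proof (rule poly_mapping_eqI)
  fix j
  show "Poly_Mapping.lookup f j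
      = Poly_Mapping.lookup (\<Sum>k\<in>Poly_Mapping.keys f. Poly_Mapping.single k (Poly_Mapping.lookup f k)) j"
    by (cases "j \<in> Poly_Mapping.keys f") (auto simp: lookup_sum lookup_single when_def in_keys_iff)
qed

locale monomialwise_additive =
  fixes h :: "int \<Rightarrow> 'a::comm_ring_1 \<Rightarrow> 'a laurent"
  assumes zero: "\<And>k. h k 0 = 0"
    and add: "\<And>k x y. h k (x + y) = h k x + h k y"
begin

lemma pm_extend_superset:
  assumes "finite S" "Poly_Mapping.keys f \<subseteq> S"
  shows "pm_extend h f = (\<Sum>k\<in>S. h k (Poly_Mapping.lookup f k))"
  unfolding pm_extend_def
  by (rule sum.mono_neutral_left) (use assms in \<open>auto simp: in_keys_iff zero\<close>)

lemma pm_extend_add: "pm_extend h (f + g) = pm_extend h f + pm_extend h g"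
proof -
  let ?S = "Poly_Mapping.keys f \<union> Poly_Mapping.keys g"
  have "pm_extend h (f + g) = (\<Sum>k\<in>?S. h k (Poly_Mapping.lookup (f + g) k))"
    by (rule pm_extend_superset) (auto simp: keys_add)
  also have "\<dots> = (\<Sum>k\<in>?S. h k (Poly_Mapping.lookup f k)) + (\<Sum>k\<in>?S. h k (Poly_Mapping.lookup g k))"
    by (simp add: lookup_add add sum.distrib)
  also have "\<dots> = pm_extend h f + pm_extend h g"
    by (subst (1 2) pm_extend_superset[of ?S]) auto
  finally show ?thesis .
qed

lemma pm_extend_zero [simp]: "pm_extend h 0 = 0"
  by (simp add: pm_extend_def)

lemma pm_extend_single [simp]: "pm_extend h (Poly_Mapping.single k c) = h k c"
  by (cases "c = 0") (auto simp: pm_extend_def zero)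

lemma pm_extend_sum: "pm_extend h (sum F A) = (\<Sum>x\<in>A. pm_extend h (F x))"
  by (induction A rule: infinite_finite_induct) (auto simp: pm_extend_add)

lemma pm_extend_uminus: "pm_extend h (- f) = - pm_extend h f"
  using pm_extend_add[of "- f" f] by (simp add: pm_extend_def eq_neg_iff_add_eq_0)

lemma pm_extend_mult:
  assumes "\<And>k l a b. h (k + l) (a * b) = h k a * h l b"
  shows "pm_extend h (f * g) = pm_extend h f * pm_extend h g"
proof -
  have "f * g = (\<Sum>k\<in>Poly_Mapping.keys f. \<Sum>l\<in>Poly_Mapping.keys g.
      Poly_Mapping.single (k + l) (Poly_Mapping.lookup f k * Poly_Mapping.lookup g l))"
    by (subst (1 2) poly_mapping_sum_single) (simp add: sum_product mult_single)
  then have "pm_extend h (f * g) = (\<Sum>k\<in>Poly_Mapping.keys f. \<Sum>l\<in>Poly_Mapping.keys g.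
      h k (Poly_Mapping.lookup f k) * h l (Poly_Mapping.lookup g l))"
    by (simp add: pm_extend_sum assms)
  also have "\<dots> = pm_extend h f * pm_extend h g"
    by (simp add: pm_extend_def sum_product)
  finally show ?thesis .
qed

end

definition dilate :: "int \<Rightarrow> 'a::comm_ring_1 laurent \<Rightarrow> 'a laurent" where
  "dilate p = pm_extend (\<lambda>k. Poly_Mapping.single (p * k))"

interpretation dilate: monomialwise_additive "\<lambda>k. Poly_Mapping.single (p * k)"
  by unfold_locales (auto simp: single_add)

lemma dilate_single [simp]: "dilate p (Poly_Mapping.single k c) = Poly_Mapping.single (p * k) c"
  by (simp add: dilate_def)

lemma dilate_sum: "dilate p (sum F A) = (\<Sum>x\<in>A. dilate p (F x))"
  by (simp add: dilate_def dilate.pm_extend_sum)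

lemma dilate_add: "dilate p (f + g) = dilate p f + dilate p g"
  by (simp add: dilate_def dilate.pm_extend_add)

lemma dilate_uminus: "dilate p (- f) = - dilate p f"
  by (simp add: dilate_def dilate.pm_extend_uminus)

lemma dilate_mult: "dilate p (f * g) = dilate p f * dilate p g"
  unfolding dilate_def by (rule dilate.pm_extend_mult) (simp add: mult_single distrib_left)

lemma dilate_of_nat [simp]: "dilate p (of_nat n) = of_nat n"
  by (simp flip: single_of_nat)

locale ring_involution =
  fixes st :: "'a::comm_ring_1 \<Rightarrow> 'a"
  assumes st_add: "\<And>x y. st (x + y) = st x + st y"
    and st_mult: "\<And>x y. st (x * y) = st x * st y"
    and st_one: "st 1 = 1"
    and st_invol: "\<And>x. st (st x) = x"
begin

abbreviation sqnorm :: "'a laurent \<Rightarrow> 'a laurent" where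
  "sqnorm f \<equiv> f * lstar st f"

lemma st_zero: "st 0 = 0"
  using st_add[of 0 0] by simp

sublocale lstar: monomialwise_additive "\<lambda>k c. Poly_Mapping.single (- k) (st c)"
  by unfold_locales (auto simp: st_zero st_add single_add)

lemma lstar_eq_pm_extend: "lstar st = pm_extend (\<lambda>k c. Poly_Mapping.single (- k) (st c))"
  by (simp add: fun_eq_iff lstar_def pm_extend_def)

lemma lstar_single [simp]: "lstar st (Poly_Mapping.single k c) = Poly_Mapping.single (- k) (st c)"
  by (simp add: lstar_eq_pm_extend)

lemma lstar_add: "lstar st (f + g) = lstar st f + lstar st g"
  by (simp add: lstar_eq_pm_extend lstar.pm_extend_add)

lemma lstar_uminus: "lstar st (- f) = - lstar st f"
  by (simp add: lstar_eq_pm_extend lstar.pm_extend_uminus)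

lemma lstar_diff: "lstar st (f - g) = lstar st f - lstar st g"
  using lstar_add[of f "- g"] by (simp add: lstar_uminus)

lemma lstar_sum: "lstar st (sum F A) = (\<Sum>x\<in>A. lstar st (F x))"
  by (simp add: lstar_eq_pm_extend lstar.pm_extend_sum)

lemma lstar_mult: "lstar st (f * g) = lstar st f * lstar st g"
  unfolding lstar_eq_pm_extend by (rule lstar.pm_extend_mult) (simp add: st_mult mult_single)

lemma lstar_lstar: "lstar st (lstar st f) = f"
  by (subst (1 2) poly_mapping_sum_single[of f]) (simp add: lstar_sum st_invol)

lemma lstar_dilate: "lstar st (dilate p f) = dilate p (lstar st f)"
  by (subst (1 2) poly_mapping_sum_single[of f]) (simp add: lstar_sum dilate_sum)

lemma sqnorm_dilate: "sqnorm (dilate p f) = dilate p (sqnorm f)"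
  by (simp add: lstar_dilate dilate_mult)

lemma sqnorm_monomial_mult: "sqnorm (Poly_Mapping.single k 1 * f) = sqnorm f"
proof -
  have "sqnorm (Poly_Mapping.single k 1 * f)
      = (Poly_Mapping.single k 1 * Poly_Mapping.single (- k) 1) * sqnorm f"
    by (simp add: lstar_mult st_one mult_ac)
  then show ?thesis by (simp add: mult_single)
qed

end

lemma psi_eq_dilate_phi: "psi a = Poly_Mapping.single (1 - int (length a)) 1 * dilate 2 (phi a)"
  by (simp add: psi_def phi_def dilate_sum sum_distrib_left mult_single algebra_simps)

lemma psi_map_uminus: "psi (map uminus a) = - psi a"
  by (simp add: psi_def single_uminus sum_negf)

lemma psi_mult_dilate_psi:
  "psi X * dilate p (psi Y) = (\<Sum>k<length X. \<Sum>l<length Y.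
     Poly_Mapping.single ((2 * int k + 1 - int (length X)) + p * (2 * int l + 1 - int (length Y)))
       (X ! k * Y ! l))"
  by (simp add: psi_def dilate_sum sum_product mult_single)

context ring_involution
begin

lemma sqnorm_psi: "sqnorm (psi a) = dilate 2 (sqnorm (phi a))"
  by (simp add: psi_eq_dilate_phi sqnorm_monomial_mult sqnorm_dilate)

(* The exponents of psi a are symmetric about 0, so conjugating psi a only reverses its coefficients. *)
lemma psi_conj: "psi (map st (rev a)) = lstar st (psi a)"
proof -
  let ?l = "length a"
  have "lstar st (psi a) = (\<Sum>i<?l. Poly_Mapping.single (- (2 * int i + 1 - int ?l)) (st (a ! i)))"
    by (simp add: psi_def lstar_sum)
  also have "\<dots> = (\<Sum>j<?l. Poly_Mapping.single (2 * int j + 1 - int ?l) (st (rev a ! j)))"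
    by (rule sum.reindex_bij_witness[of _ "\<lambda>i. ?l - 1 - i" "\<lambda>j. ?l - 1 - j"])
       (auto simp: rev_nth of_nat_diff algebra_simps)
  finally show ?thesis
    by (simp add: psi_def)
qed

end

lemma sum_lessThan_mult_div_mod:
  "(\<Sum>t<k * P. w (t mod P) (t div P)) = (\<Sum>v<k. \<Sum>u<P. w u v)"
  for w :: "nat \<Rightarrow> nat \<Rightarrow> 'b::comm_monoid_add"
proof -
  have "(\<Sum>t<k * P. w (t mod P) (t div P)) = (\<Sum>v<k. \<Sum>t\<in>{v * P..<v * P + P}. w (t mod P) (t div P))"
    by (rule sum.nat_group[symmetric])
  also have "\<dots> = (\<Sum>v<k. \<Sum>u<P. w ((u + v * P) mod P) ((u + v * P) div P))"
    by (simp add: sum.shift_bounds_nat_ivl[where m = 0, simplified] atLeast0LessThan add.commute)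
  also have "\<dots> = (\<Sum>v<k. \<Sum>u<P. w u v)"
    by (intro sum.cong refl) simp
  finally show ?thesis .
qed

lemma sum_lessThan_2: "(\<Sum>i<2. w i) = w 0 + w 1"
  for w :: "nat \<Rightarrow> 'b::comm_monoid_add"
  by (simp add: numeral_2_eq_2)

lemma sum_lessThan_parity:
  "(\<Sum>u<2 * n + 1. w u) = (\<Sum>i<2. \<Sum>k<n + 1 - i. w (2 * k + i))"
  for w :: "nat \<Rightarrow> 'b::comm_monoid_add"
  by (induction n) (simp_all add: numeral_2_eq_2 ac_simps)

definition grid_seq ::
  "nat \<Rightarrow> nat \<Rightarrow> (nat \<Rightarrow> nat \<Rightarrow> 'a::comm_ring_1 list) \<Rightarrow> (nat \<Rightarrow> nat \<Rightarrow> 'a list) \<Rightarrow> 'a list" where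
  "grid_seq n m X Y = map (\<lambda>t. let u = t mod (2 * n + 1); v = t div (2 * n + 1) in
      X (u mod 2) (v mod 2) ! (u div 2) * Y (u mod 2) (v mod 2) ! (v div 2))
    [0..<(2 * m + 1) * (2 * n + 1)]"

lemma phi_map_upt: "phi (map f [0..<l]) = (\<Sum>i<l. Poly_Mapping.single (int i) (f i))"
  by (simp add: phi_def)

lemma length_grid_seq [simp]: "length (grid_seq n m X Y) = (2 * m + 1) * (2 * n + 1)"
  by (simp add: grid_seq_def)

lemma set_grid_seq_subset:
  assumes "\<And>i j. i < 2 \<Longrightarrow> j < 2 \<Longrightarrow>
      length (X i j) = n + 1 - i \<and> length (Y i j) = m + 1 - j \<and> set (X i j) \<subseteq> T \<and> set (Y i j) \<subseteq> T"
    and "\<And>x y. x \<in> T \<Longrightarrow> y \<in> T \<Longrightarrow> x * y \<in> T"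
  shows "set (grid_seq n m X Y) \<subseteq> T"
proof -
  have "X (u mod 2) (v mod 2) ! (u div 2) * Y (u mod 2) (v mod 2) ! (v div 2) \<in> T"
    if "u < 2 * n + 1" "v < 2 * m + 1" for u v
  proof (rule assms(2))
    have "u div 2 < n + 1 - u mod 2" "v div 2 < m + 1 - v mod 2"
      using that div_mult_mod_eq[of u 2] div_mult_mod_eq[of v 2] mod_less_divisor[of 2 u]
        mod_less_divisor[of 2 v] by arith+
    with assms(1)[of "u mod 2" "v mod 2"]
    show "X (u mod 2) (v mod 2) ! (u div 2) \<in> T" "Y (u mod 2) (v mod 2) ! (v div 2) \<in> T"
      by (auto intro: subsetD[OF _ nth_mem])
  qed
  moreover have "t div (2 * n + 1) < 2 * m + 1" if "t < (2 * m + 1) * (2 * n + 1)" for t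
    using that by (simp add: less_mult_imp_div_less)
  ultimately show ?thesis
    by (auto simp: grid_seq_def Let_def)
qed

(* Entry u + (2n+1) v of the grid sequence sits at exponent (u - n) + (2n+1)(v - m); the parities
   of u and v select the product psi (X i j) * psi (Y i j)(x^(2n+1)) that covers this exponent. *)
lemma grid_seq_eq_sum_products:
  assumes "\<And>i j. i < 2 \<Longrightarrow> j < 2 \<Longrightarrow> length (X i j) = n + 1 - i \<and> length (Y i j) = m + 1 - j"
  shows "Poly_Mapping.single (- (int n + int (2 * n + 1) * int m)) 1 * phi (grid_seq n m X Y)
    = (\<Sum>i<2. \<Sum>j<2. psi (X i j) * dilate (int (2 * n + 1)) (psi (Y i j)))"
proof -
  define P where "P = 2 * n + 1"
  define w where "w u v = Poly_Mapping.single ((int u - int n) + int P * (int v - int m))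
      (X (u mod 2) (v mod 2) ! (u div 2) * Y (u mod 2) (v mod 2) ! (v div 2))" for u v
  have "Poly_Mapping.single (- (int n + int P * int m)) 1 * phi (grid_seq n m X Y)
      = (\<Sum>t<(2 * m + 1) * P. w (t mod P) (t div P))"
  proof -
    have index_eq: "- (int n + int P * int m) + int t
        = (int (t mod P) - int n) + int P * (int (t div P) - int m)" for t
      using mod_mult_div_eq[of t P] by (simp add: algebra_simps flip: of_nat_mult of_nat_add)
    show ?thesis
      unfolding grid_seq_def phi_map_upt sum_distrib_left Let_def P_def[symmetric]
      by (intro sum.cong refl) (simp only: mult_single mult_1 w_def index_eq)
  qed
  also have "\<dots> = (\<Sum>v<2 * m + 1. \<Sum>u<P. w u v)"
    by (rule sum_lessThan_mult_div_mod)
  also have "\<dots> = (\<Sum>j<2. \<Sum>l<m + 1 - j. \<Sum>i<2. \<Sum>k<n + 1 - i. w (2 * k + i) (2 * l + j))"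
    by (simp only: P_def sum_lessThan_parity)
  also have "\<dots> = (\<Sum>i<2. \<Sum>j<2. \<Sum>k<n + 1 - i. \<Sum>l<m + 1 - j. w (2 * k + i) (2 * l + j))"
    by (simp only: sum.swap[of _ _ "{..<m + 1 - _}"]) (rule sum.swap)
  also have "\<dots> = (\<Sum>i<2. \<Sum>j<2. psi (X i j) * dilate (int P) (psi (Y i j)))"
  proof (intro sum.cong refl)
    fix i j :: nat assume "i \<in> {..<2}" "j \<in> {..<2}"
    with assms[of i j] show "(\<Sum>k<n + 1 - i. \<Sum>l<m + 1 - j. w (2 * k + i) (2 * l + j))
        = psi (X i j) * dilate (int P) (psi (Y i j))"
      by (auto simp: psi_mult_dilate_psi w_def algebra_simps)
  qed
  finally show ?thesis
    by (simp add: P_def)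
qed

context ring_involution
begin

lemma sqnorm_phi_grid_seq:
  assumes "\<And>i j. i < 2 \<Longrightarrow> j < 2 \<Longrightarrow> length (X i j) = n + 1 - i \<and> length (Y i j) = m + 1 - j"
  shows "sqnorm (phi (grid_seq n m X Y))
    = sqnorm (\<Sum>i<2. \<Sum>j<2. psi (X i j) * dilate (int (2 * n + 1)) (psi (Y i j)))"
proof -
  have e: "Poly_Mapping.single (- (int n + int (2 * n + 1) * int m)) 1 * phi (grid_seq n m X Y)
    = (\<Sum>i<2. \<Sum>j<2. psi (X i j) * dilate (int (2 * n + 1)) (psi (Y i j)))"
    by (rule grid_seq_eq_sum_products[OF assms])
  show ?thesis
    unfolding e[symmetric] by (rule sqnorm_monomial_mult[symmetric])
qed

lemma euler_four_square:
  "sqnorm (A * F - B * lstar st E - C * lstar st G - lstar st D * H)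
   + sqnorm (B * lstar st F + A * E - D * lstar st G + lstar st C * H)
   + sqnorm (A * G - lstar st B * H + C * lstar st F + D * lstar st E)
   + sqnorm (B * G + lstar st A * H + D * F - C * E)
   = (sqnorm A + sqnorm B + sqnorm C + sqnorm D) * (sqnorm E + sqnorm F + sqnorm G + sqnorm H)"
  by (simp add: lstar_add lstar_diff lstar_mult lstar_lstar algebra_simps)

lemma sqnorm_psi_composition:
  assumes T_mult: "\<And>x y. x \<in> T \<Longrightarrow> y \<in> T \<Longrightarrow> x * y \<in> T"
    and T_neg1: "- 1 \<in> T"
    and T_st: "\<And>x. x \<in> T \<Longrightarrow> st x \<in> T"
    and len: "length a = n + 1" "length b = n + 1" "length c = n" "length d = n"
      "length e = m" "length f = m + 1" "length g = m + 1" "length h = m"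
    and set: "set a \<subseteq> T" "set b \<subseteq> T" "set c \<subseteq> T" "set d \<subseteq> T"
      "set e \<subseteq> T" "set f \<subseteq> T" "set g \<subseteq> T" "set h \<subseteq> T"
  shows "\<exists>q r s t. length q = (2 * m + 1) * (2 * n + 1) \<and> set q \<subseteq> T \<and>
      length r = (2 * m + 1) * (2 * n + 1) \<and> set r \<subseteq> T \<and>
      length s = (2 * m + 1) * (2 * n + 1) \<and> set s \<subseteq> T \<and>
      length t = (2 * m + 1) * (2 * n + 1) \<and> set t \<subseteq> T \<and>
      sqnorm (phi q) + sqnorm (phi r) + sqnorm (phi s) + sqnorm (phi t)
      = (sqnorm (psi a) + sqnorm (psi b) + sqnorm (psi c) + sqnorm (psi d))
        * dilate (int (2 * n + 1)) (sqnorm (psi e) + sqnorm (psi f) + sqnorm (psi g) + sqnorm (psi h))"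
proof -
  have T_uminus: "- x \<in> T" if "x \<in> T" for x
    using T_mult[OF T_neg1 that] by simp
  define conj where "conj xs = map st (rev xs)" for xs :: "'a list"
  define neg where "neg xs = map uminus xs" for xs :: "'a list"
  have [simp]: "length (conj xs) = length xs" "length (neg xs) = length xs" for xs
    by (simp_all add: conj_def neg_def)
  have [simp]: "psi (conj xs) = lstar st (psi xs)" "psi (neg xs) = - psi xs" for xs
    by (simp_all add: conj_def neg_def psi_conj psi_map_uminus)
  define P where "P = int (2 * n + 1)"
  define A B C D where psi_abcd: "A = psi a" "B = psi b" "C = psi c" "D = psi d"
  define E F G H where dilate_psi_efgh:
    "E = dilate P (psi e)" "F = dilate P (psi f)" "G = dilate P (psi g)" "H = dilate P (psi h)"
  define q where "q = grid_seq n m (\<lambda>i j. [[a, neg b], [neg c, neg (conj d)]] ! i ! j)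
    (\<lambda>i j. [[f, conj e], [conj g, h]] ! i ! j)"
  define r where "r = grid_seq n m (\<lambda>i j. [[b, a], [neg d, conj c]] ! i ! j)
    (\<lambda>i j. [[conj f, e], [conj g, h]] ! i ! j)"
  define s where "s = grid_seq n m (\<lambda>i j. [[a, neg (conj b)], [c, d]] ! i ! j)
    (\<lambda>i j. [[g, h], [conj f, conj e]] ! i ! j)"
  define t where "t = grid_seq n m (\<lambda>i j. [[b, conj a], [d, neg c]] ! i ! j)
    (\<lambda>i j. [[g, h], [f, e]] ! i ! j)"
  note grid_simps = less_2_cases_iff len sum_lessThan_2 psi_abcd dilate_psi_efgh P_def dilate_uminus
  have "sqnorm (phi q) = sqnorm (A * F - B * lstar st E - C * lstar st G - lstar st D * H)"
    unfolding q_def by (subst sqnorm_phi_grid_seq)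
      (auto simp: grid_simps simp flip: lstar_dilate intro!: arg_cong[where f = sqnorm])
  moreover have "sqnorm (phi r) = sqnorm (B * lstar st F + A * E - D * lstar st G + lstar st C * H)"
    unfolding r_def by (subst sqnorm_phi_grid_seq)
      (auto simp: grid_simps simp flip: lstar_dilate intro!: arg_cong[where f = sqnorm])
  moreover have "sqnorm (phi s) = sqnorm (A * G - lstar st B * H + C * lstar st F + D * lstar st E)"
    unfolding s_def by (subst sqnorm_phi_grid_seq)
      (auto simp: grid_simps simp flip: lstar_dilate intro!: arg_cong[where f = sqnorm])
  moreover have "sqnorm (phi t) = sqnorm (B * G + lstar st A * H + D * F - C * E)"
    unfolding t_def by (subst sqnorm_phi_grid_seq)
      (auto simp: grid_simps simp flip: lstar_dilate intro!: arg_cong[where f = sqnorm])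
  ultimately have "sqnorm (phi q) + sqnorm (phi r) + sqnorm (phi s) + sqnorm (phi t)
      = (sqnorm A + sqnorm B + sqnorm C + sqnorm D) * (sqnorm E + sqnorm F + sqnorm G + sqnorm H)"
    by (simp only: euler_four_square)
  also have "\<dots> = (sqnorm (psi a) + sqnorm (psi b) + sqnorm (psi c) + sqnorm (psi d))
      * dilate (int (2 * n + 1)) (sqnorm (psi e) + sqnorm (psi f) + sqnorm (psi g) + sqnorm (psi h))"
    by (simp add: psi_abcd dilate_psi_efgh P_def sqnorm_dilate dilate_add)
  finally have "sqnorm (phi q) + sqnorm (phi r) + sqnorm (phi s) + sqnorm (phi t) = \<dots>" .
  moreover have "set q \<subseteq> T \<and> set r \<subseteq> T \<and> set s \<subseteq> T \<and> set t \<subseteq> T"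
    unfolding q_def r_def s_def t_def
    by (intro conjI set_grid_seq_subset[OF _ T_mult];
        auto simp: less_2_cases_iff len conj_def neg_def intro!: T_st T_uminus dest: set[THEN subsetD])
  moreover have "length u = (2 * m + 1) * (2 * n + 1)" if "u \<in> {q, r, s, t}" for u
    using that by (auto simp: q_def r_def s_def t_def)
  ultimately show ?thesis
    by blast
qed

end

theorem theorem3p3:
  fixes st :: "'a::comm_ring_1 \<Rightarrow> 'a" and T :: "'a set"
    and m n :: nat and a b c d f g h e :: "'a list"
  assumes st_add: "\<And>x y. st (x + y) = st x + st y"
    and st_mult: "\<And>x y. st (x * y) = st x * st y"
    and st_one: "st 1 = 1"
    and st_invol: "\<And>x. st (st x) = x"
    and T_sub: "T \<subseteq> UNIV - {0}"
    and T_mult: "\<And>x y. x \<in> T \<Longrightarrow> y \<in> T \<Longrightarrow> x * y \<in> T"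
    and T_neg1: "- 1 \<in> T"
    and T_star: "st ` T = T"
    and mn: "0 < m" "0 < n"
    and a: "length a = n + 1" "set a \<subseteq> T"
    and b: "length b = n + 1" "set b \<subseteq> T"
    and c: "length c = n" "set c \<subseteq> T"
    and d: "length d = n" "set d \<subseteq> T"
    and f: "length f = m + 1" "set f \<subseteq> T"
    and g: "length g = m + 1" "set g \<subseteq> T"
    and h: "length h = m" "set h \<subseteq> T"
    and e: "length e = m" "set e \<subseteq> T"
    and abcd: "phi a * lstar st (phi a) + phi b * lstar st (phi b)
               + phi c * lstar st (phi c) + phi d * lstar st (phi d)
               = of_nat (2 * (2 * n + 1))"
    and efgh: "phi e * lstar st (phi e) + phi f * lstar st (phi f)
               + phi g * lstar st (phi g) + phi h * lstar st (phi h)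
               = of_nat (2 * (2 * m + 1))"
  shows "\<exists>q r s t :: 'a list.
           length q = (2 * m + 1) * (2 * n + 1) \<and> set q \<subseteq> T \<and>
           length r = (2 * m + 1) * (2 * n + 1) \<and> set r \<subseteq> T \<and>
           length s = (2 * m + 1) * (2 * n + 1) \<and> set s \<subseteq> T \<and>
           length t = (2 * m + 1) * (2 * n + 1) \<and> set t \<subseteq> T \<and>
           phi q * lstar st (phi q) + phi r * lstar st (phi r)
             + phi s * lstar st (phi s) + phi t * lstar st (phi t)
           = of_nat (4 * (2 * m + 1) * (2 * n + 1))"
proof -
  interpret ring_involution st
    by unfold_locales (fact st_add st_mult st_one st_invol)+
  have T_st: "st x \<in> T" if "x \<in> T" for x
    using that T_star by blast
  have "sqnorm (psi a) + sqnorm (psi b) + sqnorm (psi c) + sqnorm (psi d) = of_nat (2 * (2 * n + 1))"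
    unfolding sqnorm_psi dilate_add[symmetric] abcd by (rule dilate_of_nat)
  moreover have "sqnorm (psi e) + sqnorm (psi f) + sqnorm (psi g) + sqnorm (psi h) = of_nat (2 * (2 * m + 1))"
    unfolding sqnorm_psi dilate_add[symmetric] efgh by (rule dilate_of_nat)
  moreover have "(of_nat (2 * (2 * n + 1)) * of_nat (2 * (2 * m + 1)) :: 'a laurent)
      = of_nat (4 * (2 * m + 1) * (2 * n + 1))"
    unfolding of_nat_mult[symmetric] by (rule arg_cong[where f = of_nat]) (simp add: algebra_simps)
  ultimately show ?thesis
    using sqnorm_psi_composition[OF T_mult T_neg1 T_st a(1) b(1) c(1) d(1) e(1) f(1) g(1) h(1)
        a(2) b(2) c(2) d(2) e(2) f(2) g(2) h(2)]
    by (simp only: dilate_of_nat)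
qed

end
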